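(* Let $\kappa$ be an uncountable regular cardinal and let $k\in\mathbb N$. Then every $k$-connected graph with at least $\kappa$ vertices contains a subdivision of the complete bipartite graph $K_{k,\kappa}$. *)

theory Defs
  imports Main
begin

definition sgraph :: "'a set \<Rightarrow> ('a \<Rightarrow> 'a \<Rightarrow> bool) \<Rightarrow> bool" where
  "sgraph V E \<longleftrightarrow> (\<forall>x y. E x y \<longrightarrow> x \<in> V \<and> y \<in> V \<and> x \<noteq> y \<and> E y x)"

definition connected_on :: "'a set \<Rightarrow> ('a \<Rightarrow> 'a \<Rightarrow> bool) \<Rightarrow> bool" where
  "connected_on W E \<longleftrightarrow> W \<noteq> {} \<and>
     (\<forall>x\<in>W. \<forall>y\<in>W. (\<lambda>a b. E a b \<and> a \<in> W \<and> b \<in> W)\<^sup>*\<^sup>* x y)"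

definition k_connected :: "'a set \<Rightarrow> ('a \<Rightarrow> 'a \<Rightarrow> bool) \<Rightarrow> nat \<Rightarrow> bool" where
  "k_connected V E k \<longleftrightarrow> (infinite V \<or> k < card V) \<and>
     (\<forall>X. X \<subseteq> V \<and> finite X \<and> card X < k \<longrightarrow> connected_on (V - X) E)"

definition is_path :: "'a set \<Rightarrow> ('a \<Rightarrow> 'a \<Rightarrow> bool) \<Rightarrow> 'a list \<Rightarrow> bool" where
  "is_path V E p \<longleftrightarrow> p \<noteq> [] \<and> distinct p \<and> set p \<subseteq> V \<and>
     (\<forall>i. Suc i < length p \<longrightarrow> E (p ! i) (p ! Suc i))"

definition inner :: "'a list \<Rightarrow> 'a set" where
  "inner p = set (butlast (tl p))"

definition contains_subdivision ::
  "'a set \<Rightarrow> ('a \<Rightarrow> 'a \<Rightarrow> bool) \<Rightarrow> 'b set \<Rightarrow> ('b \<Rightarrow> 'b \<Rightarrow> bool) \<Rightarrow> bool" where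
  "contains_subdivision V E VH EH \<longleftrightarrow>
    (\<exists>f P. inj_on f VH \<and> f ` VH \<subseteq> V \<and>
       (\<forall>u v. EH u v \<longrightarrow>
          is_path V E (P u v) \<and> hd (P u v) = f u \<and> last (P u v) = f v \<and>
          P v u = rev (P u v) \<and> inner (P u v) \<inter> f ` VH = {}) \<and>
       (\<forall>u v u' v'. EH u v \<and> EH u' v' \<and> {u, v} \<noteq> {u', v'} \<longrightarrow>
          inner (P u v) \<inter> inner (P u' v') = {}))"

text \<open>The complete bipartite graph K_{k,kappa}: vertex classes {..<k} and Field r,
  for a cardinal r.\<close>
definition KB_verts :: "nat \<Rightarrow> 'k rel \<Rightarrow> (nat + 'k) set" where
  "KB_verts k r = {..<k} <+> Field r"

definition KB_edges :: "nat \<Rightarrow> 'k rel \<Rightarrow> (nat + 'k) \<Rightarrow> (nat + 'k) \<Rightarrow> bool" where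
  "KB_edges k r x y \<longleftrightarrow>
     (\<exists>i j. i < k \<and> j \<in> Field r \<and> ((x = Inl i \<and> y = Inr j) \<or> (x = Inr j \<and> y = Inl i)))"

end

theory Submission
  imports Defs
begin

text \<open>
  Call a finite set A of vertices robust if for every set W of fewer than \<kappa> vertices
  some vertex outside W sends a fan of |A| paths onto A whose vertices, apart from A, avoid W.
  A robust k-set exists: close a k-set U0 under choosing, for every finite non-robust A, a
  small set blocking A. By regularity and uncountability of \<kappa> the closure U has fewer than
  \<kappa> vertices, so some vertex x lies outside U, and k-connectedness (via the fan version of
  Menger's theorem, proved here by augmenting paths) yields a k-fan from x to U. Its set A of
  endpoints lies in U while the rest of the fan avoids U, hence avoids the blocking set of A,
  so A is robust. Given a robust A, a maximal family of fans onto A with pairwise disjoint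
  interiors must have \<kappa> members, since fewer would leave a small union that yet another
  fan avoids. The hubs of \<kappa> such fans together with A are the branch vertices of a
  subdivided K_{k,\<kappa>}.
\<close>

lemma Int_singletonD: "A \<inter> B = {a} \<Longrightarrow> v \<in> A \<Longrightarrow> v \<in> B \<Longrightarrow> v = a"
  by blast

subsection \<open>Paths\<close>

lemma is_path_iff: "is_path V E p \<longleftrightarrow> p \<noteq> [] \<and> distinct p \<and> set p \<subseteq> V \<and> successively E p"
  by (simp add: is_path_def successively_conv_nth)

lemma is_path_append:
  assumes "is_path V E q" "is_path V E t" "last q = hd t" "set q \<inter> set t = {hd t}"
  shows "is_path V E (q @ tl t)"
proof -
  obtain a t' where t: "t = a # t'" using assms(2) by (cases t) (auto simp: is_path_iff)
  with assms show ?thesis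
    by (cases q rule: rev_cases) (auto simp: is_path_iff successively_append_iff successively_Cons)
qed

lemma last_append_tl: "t \<noteq> [] \<Longrightarrow> last q = hd t \<Longrightarrow> q \<noteq> [] \<Longrightarrow> last (q @ tl t) = last t"
  by (cases t) auto

lemma is_path_rev: "is_path V E p \<Longrightarrow> (\<And>x y. E x y \<Longrightarrow> E y x) \<Longrightarrow> is_path V E (rev p)"
  unfolding is_path_iff by (auto elim: successively_mono)

lemma is_path_appendD1: "is_path V E (xs @ ys) \<Longrightarrow> xs \<noteq> [] \<Longrightarrow> is_path V E xs"
  unfolding is_path_iff by (auto simp: successively_append_iff)

lemma is_path_appendD2: "is_path V E (xs @ ys) \<Longrightarrow> ys \<noteq> [] \<Longrightarrow> is_path V E ys"
  unfolding is_path_iff by (auto simp: successively_append_iff)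

lemma is_path_mono: "is_path W E p \<Longrightarrow> W \<subseteq> V \<Longrightarrow> is_path V E p"
  unfolding is_path_iff by auto

lemma rtranclp_imp_is_path:
  assumes "(\<lambda>a b. E a b \<and> a \<in> W \<and> b \<in> W)\<^sup>*\<^sup>* x y" "x \<in> W"
  shows "\<exists>p. is_path W E p \<and> hd p = x \<and> last p = y"
  using assms
proof (induction rule: converse_rtranclp_induct)
  case base
  then show ?case by (intro exI[of _ "[y]"]) (auto simp: is_path_iff)
next
  case (step x z)
  then obtain p where p: "is_path W E p" "hd p = z" "last p = y" by auto
  show ?case
  proof (cases "x \<in> set p")
    case True
    then obtain p1 p2 where "p = p1 @ x # p2" by (meson split_list)
    with p show ?thesis by (intro exI[of _ "x # p2"]) (auto dest: is_path_appendD2)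
  next
    case False
    with p step show ?thesis
      by (intro exI[of _ "x # p"]) (cases p; auto simp: is_path_iff successively_Cons)
  qed
qed


lemma is_path_first_hit:
  assumes "is_path V E p" "set p \<inter> B \<noteq> {}"
  obtains q where "is_path V E q" "hd q = hd p" "set q \<subseteq> set p" "set q \<inter> B = {last q}"
proof -
  obtain ys z zs where p: "p = ys @ z # zs" "z \<in> B" "\<forall>w\<in>set ys. w \<notin> B"
    using split_list_first_prop[of p "\<lambda>w. w \<in> B"] assms(2) by blast
  with assms(1) have "is_path V E (ys @ [z])" using is_path_appendD1[of V E "ys @ [z]" zs] by simp
  with p show thesis by (intro that[of "ys @ [z]"]) (auto simp: hd_append)
qed

lemma inner_eq: "distinct p \<Longrightarrow> inner p = set p - {hd p, last p}"
proof (induction p rule: induct_list012)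
  case (3 a b t)
  then show ?case by (cases t rule: rev_cases) (auto simp: inner_def)
qed (simp_all add: inner_def)

lemma inner_rev: "inner (rev p) = inner p"
proof -
  have "tl (rev p) = rev (butlast p)" using butlast_rev[of "rev p"] by simp
  then show ?thesis unfolding inner_def by (simp add: butlast_tl)
qed

lemma is_path_suffix:
  assumes "is_path V E T" "z \<in> set T"
  obtains T' where "is_path V E T'" "hd T' = z" "last T' = last T" "set T' \<subseteq> set T"
    "z \<noteq> hd T \<Longrightarrow> hd T \<notin> set T'"
proof -
  obtain T0 T1 where T: "T = T0 @ z # T1" using split_list[OF assms(2)] by blast
  have "distinct T" using assms(1) by (simp add: is_path_iff)
  then have "hd T \<notin> set (z # T1)" if "z \<noteq> hd T" using that T by (cases T0) auto
  with T assms(1) show thesis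
    by (intro that[of "z # T1"]) (auto dest: is_path_appendD2)
qed

lemma subset_meets_at_last:
  "set T' \<subseteq> set T \<Longrightarrow> last T' = last T \<Longrightarrow> T' \<noteq> [] \<Longrightarrow> set T \<inter> B = {last T} \<Longrightarrow> set T' \<inter> B = {last T'}"
  using last_in_set by fastforce

lemma split_two_branches:
  assumes T1: "is_path V E T1" "hd T1 = y" "set T1 \<inter> B = {last T1}"
    and T2: "is_path V E T2" "hd T2 = y" "set T2 \<inter> B = {last T2}"
    and T12: "set T1 \<inter> set T2 = {y}" and z: "z \<noteq> y" "z \<in> V" "z \<in> set T1 \<union> set T2 \<union> B"
  obtains Ty Tz where "is_path V E Ty" "hd Ty = y" "is_path V E Tz" "hd Tz = z"
    "set Ty \<union> set Tz \<subseteq> insert z (set T1 \<union> set T2)" "set Ty \<inter> set Tz = {}"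
    "set Ty \<inter> B = {last Ty}" "set Tz \<inter> B = {last Tz}"
    "last T1 \<in> {last Ty, last Tz}" "{last Ty, last Tz} \<subseteq> {last T1, last T2, z}"
proof -
  consider "z \<in> set T1" | "z \<in> set T2" | "z \<notin> set T1 \<union> set T2" "z \<in> B" using z(3) by blast
  then show thesis
  proof cases
    case 1
    obtain Tz where Tz: "is_path V E Tz" "hd Tz = z" "last Tz = last T1" "set Tz \<subseteq> set T1" "y \<notin> set Tz"
      using is_path_suffix[OF T1(1) 1] z(1) T1(2) by metis
    have "Tz \<noteq> []" using Tz(1) by (simp add: is_path_iff)
    then have "set Tz \<inter> B = {last Tz}" using subset_meets_at_last Tz(3,4) T1(3) by metis
    moreover have "set T2 \<inter> set Tz = {}" using T12 Tz(4,5) by (auto dest: equalityD1)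
    ultimately show thesis using that[OF T2(1,2) Tz(1,2)] T2(3) Tz(3,4) by auto
  next
    case 2
    obtain Tz where Tz: "is_path V E Tz" "hd Tz = z" "last Tz = last T2" "set Tz \<subseteq> set T2" "y \<notin> set Tz"
      using is_path_suffix[OF T2(1) 2] z(1) T2(2) by metis
    have "Tz \<noteq> []" using Tz(1) by (simp add: is_path_iff)
    then have "set Tz \<inter> B = {last Tz}" using subset_meets_at_last Tz(3,4) T2(3) by metis
    moreover have "set T1 \<inter> set Tz = {}" using T12 Tz(4,5) by (auto dest: equalityD1)
    ultimately show thesis using that[OF T1(1,2) Tz(1,2)] T1(3) Tz(3,4) by auto
  next
    case 3
    have "is_path V E [z]" using z(2) by (simp add: is_path_iff)
    then show thesis using that[OF T1(1,2), of "[z]"] T1(3) 3 by auto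
  qed
qed

subsection \<open>Fans\<close>

definition fan :: "'a set \<Rightarrow> ('a \<Rightarrow> 'a \<Rightarrow> bool) \<Rightarrow> 'a \<Rightarrow> 'a set \<Rightarrow> 'a list set \<Rightarrow> bool" where
  "fan V E x B Ps \<longleftrightarrow> x \<in> V \<and> x \<notin> B \<and> finite Ps \<and>
     (\<forall>p\<in>Ps. is_path V E p \<and> hd p = x \<and> set p \<inter> B = {last p}) \<and>
     (\<forall>p\<in>Ps. \<forall>q\<in>Ps. p \<noteq> q \<longrightarrow> set p \<inter> set q = {x})"

lemma fanD:
  assumes "fan V E x B Ps"
  shows "x \<in> V" "x \<notin> B" "finite Ps"
    and "p \<in> Ps \<Longrightarrow> is_path V E p" "p \<in> Ps \<Longrightarrow> hd p = x" "p \<in> Ps \<Longrightarrow> set p \<inter> B = {last p}"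
    and "p \<in> Ps \<Longrightarrow> q \<in> Ps \<Longrightarrow> p \<noteq> q \<Longrightarrow> set p \<inter> set q = {x}"
  using assms unfolding fan_def by blast+

lemma fan_last_in: "fan V E x B Ps \<Longrightarrow> p \<in> Ps \<Longrightarrow> last p \<in> B"
  by (blast dest: fanD(6))

lemma inj_on_last_fan:
  assumes "fan V E x B Ps"
  shows "inj_on last Ps"
proof (rule inj_onI, rule ccontr)
  fix p q assume pq: "p \<in> Ps" "q \<in> Ps" "last p = last q" "p \<noteq> q"
  then have "last p \<in> set p \<inter> set q \<inter> B" using fanD(6)[OF assms] by (metis Int_iff insertI1)
  then show False using fanD(2)[OF assms] fanD(7)[OF assms pq(1,2,4)] by auto
qed

lemma card_last_fan: "fan V E x B Ps \<Longrightarrow> card (last ` Ps) = card Ps"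
  by (simp add: card_image inj_on_last_fan)

lemma fan_end_outside:
  assumes "fan V E x B Qs" "finite A" "card A < card Qs"
  obtains Q where "Q \<in> Qs" "last Q \<notin> A"
proof -
  have "\<not> last ` Qs \<subseteq> A"
  proof
    assume "last ` Qs \<subseteq> A"
    then have "card (last ` Qs) \<le> card A" by (rule card_mono[OF assms(2)])
    then show False using card_last_fan[OF assms(1)] assms(3) by simp
  qed
  then show thesis using that by blast
qed

lemma card_less_fan:
  assumes "fan V E x B N" "finite A" "insert w A \<subseteq> last ` N" "w \<notin> A"
  shows "card A < card N"
proof -
  have "finite (last ` N)" using fanD(3)[OF assms(1)] by simp
  then have "card (insert w A) \<le> card (last ` N)" using assms(3) by (rule card_mono)
  then show ?thesis using assms(2,4) card_last_fan[OF assms(1)] by simp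
qed

lemma fan_subset: "fan V E x B Ps \<Longrightarrow> Qs \<subseteq> Ps \<Longrightarrow> fan V E x B Qs"
  unfolding fan_def by (meson finite_subset subsetD)

lemma fan_retarget:
  "fan V E x B Ps \<Longrightarrow> x \<notin> B' \<Longrightarrow> (\<And>p. p \<in> Ps \<Longrightarrow> set p \<inter> B' = {last p}) \<Longrightarrow> fan V E x B' Ps"
  unfolding fan_def by blast

lemma fan_shrink_target:
  assumes "fan V E x B' Ps" "B \<subseteq> B'" "last ` Ps \<subseteq> B"
  shows "fan V E x B Ps"
proof (rule fan_retarget[OF assms(1)])
  show "x \<notin> B" using fanD(2)[OF assms(1)] assms(2) by blast
  fix p assume "p \<in> Ps"
  then have "set p \<inter> B' = {last p}" "last p \<in> B" using fanD(6)[OF assms(1)] assms(3) by auto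
  then show "set p \<inter> B = {last p}" using assms(2) by (auto dest: equalityD1)
qed

lemma fan_insert:
  assumes "fan V E x B Ps" "is_path V E R" "hd R = x" "set R \<inter> B = {last R}"
    and "\<And>p. p \<in> Ps \<Longrightarrow> set R \<inter> set p = {x}"
  shows "fan V E x B (insert R Ps)"
  using assms unfolding fan_def by (auto simp: Int_commute)

lemma fan_extend:
  assumes fan: "fan V E x B Qs" and Q: "Q \<in> Qs"
    and T: "is_path V E T" "hd T = last Q" "set T \<subseteq> B"
    and ends: "\<And>Q'. Q' \<in> Qs - {Q} \<Longrightarrow> last Q' \<notin> set T"
  shows "fan V E x (B - set T \<union> {last T}) (insert (Q @ tl T) (Qs - {Q}))"
proof -
  define B' where "B' = B - set T \<union> {last T}"
  have QB: "set Q \<inter> B = {last Q}" and Qpath: "is_path V E Q" and hQ: "hd Q = x"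
    using fanD[OF fan] Q by auto
  have Tne: "T \<noteq> []" "Q \<noteq> []" using T(1) Qpath by (auto simp: is_path_iff)
  have QT: "set Q \<inter> set T = {hd T}" using QB T(2,3) hd_in_set[OF Tne(1)] by auto
  have set_new: "set (Q @ tl T) = set Q \<union> set T" using QT Tne by (cases T) auto
  have others: "set Q' \<inter> set T = {}" if "Q' \<in> Qs - {Q}" for Q'
    using fanD(6)[OF fan, of Q'] that ends[OF that] T(3) by (auto dest: equalityD1)
  have "x \<notin> B'" unfolding B'_def using fanD(2)[OF fan] T(3) last_in_set[OF Tne(1)] by auto
  then have rest: "fan V E x B' (Qs - {Q})"
  proof (rule fan_retarget[OF fan_subset[OF fan Diff_subset]])
    fix p assume p: "p \<in> Qs - {Q}"
    then have "last T \<notin> set p" using others[OF p] last_in_set[OF Tne(1)] by blast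
    then show "set p \<inter> B' = {last p}" unfolding B'_def using fanD(6)[OF fan, of p] others[OF p] p by auto
  qed
  have "set Q \<inter> (B - set T) = {}" using QB T(2) hd_in_set[OF Tne(1)] by (auto dest: equalityD1)
  then have "set (Q @ tl T) \<inter> B' = {last T}"
    unfolding B'_def using set_new last_in_set[OF Tne(1)] by auto
  moreover have "last (Q @ tl T) = last T" using last_append_tl Tne T(2) by metis
  moreover have "set (Q @ tl T) \<inter> set q = {x}" if q: "q \<in> Qs - {Q}" for q
  proof -
    have "set (Q @ tl T) \<inter> set q = (set Q \<inter> set q) \<union> (set q \<inter> set T)"
      unfolding set_new by blast
    then show ?thesis using fanD(7)[OF fan Q, of q] others[OF q] q by auto
  qed
  moreover have "is_path V E (Q @ tl T)" using is_path_append[OF Qpath T(1) T(2)[symmetric] QT] .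
  moreover have "hd (Q @ tl T) = x" using hQ Tne by (simp add: hd_append)
  ultimately show ?thesis unfolding B'_def[symmetric] using fan_insert[OF rest] by simp
qed

lemma fan_extend_two:
  assumes fan: "fan V E x B' Qs" and BB': "B \<subseteq> B'"
    and Q: "Qy \<in> Qs" "Q0 \<in> Qs" "Qy \<noteq> Q0" and K: "K \<subseteq> Qs" "Qy \<notin> K" "Q0 \<notin> K"
    and Ty: "is_path V E Ty" "hd Ty = last Qy" "set Ty \<inter> B = {last Ty}"
    and Tz: "is_path V E Tz" "hd Tz = last Q0" "set Tz \<inter> B = {last Tz}"
    and T: "set Ty \<union> set Tz \<subseteq> B'" "set Ty \<inter> set Tz = {}"
    and ends: "\<And>Q. Q \<in> K \<Longrightarrow> last Q \<in> B - (set Ty \<union> set Tz)"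
  obtains N where "fan V E x B N" "last ` N = insert (last Ty) (insert (last Tz) (last ` K))"
proof -
  have ne: "Ty \<noteq> []" "Tz \<noteq> []" "Qy \<noteq> []" "Q0 \<noteq> []"
    using Ty(1) Tz(1) fanD(4)[OF fan Q(1)] fanD(4)[OF fan Q(2)] by (auto simp: is_path_iff)
  have lasts: "last (Qy @ tl Ty) = last Ty" "last (Q0 @ tl Tz) = last Tz"
    using last_append_tl ne Ty(2) Tz(2) by metis+
  have z: "last Q0 \<notin> set Ty" using Tz(2) T(2) hd_in_set[OF ne(2)] by auto
  have N0: "fan V E x B' (insert Qy (insert Q0 K))" by (rule fan_subset[OF fan]) (use Q K in blast)
  have TyB': "set Ty \<subseteq> B'" and TzB': "set Tz \<subseteq> B' - set Ty \<union> {last Ty}" using T by auto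
  have "last Q' \<notin> set Ty" if "Q' \<in> insert Qy (insert Q0 K) - {Qy}" for Q'
    using that z ends by auto
  note N1 = fan_extend[OF N0 insertI1 Ty(1,2) TyB' this]
  have "insert Qy (insert Q0 K) - {Qy} = insert Q0 K" using Q(3) K(2) by auto
  note N1 = N1[unfolded this]
  have "last Q' \<notin> set Tz" if "Q' \<in> insert (Qy @ tl Ty) (insert Q0 K) - {Q0}" for Q'
    using that ends lasts(1) T(2) last_in_set[OF ne(1)] by auto
  note N2 = fan_extend[OF N1 _ Tz(1,2) TzB' this]
  have "Qy @ tl Ty \<noteq> Q0" using lasts(1) z last_in_set[OF ne(1)] by auto
  then have "insert (Qy @ tl Ty) (insert Q0 K) - {Q0} = insert (Qy @ tl Ty) K" using K(3) by auto
  note N2 = N2[unfolded this]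
  have B: "B \<subseteq> B' - set Ty \<union> {last Ty} - set Tz \<union> {last Tz}"
    using BB' Ty(3) Tz(3) by (auto dest: equalityD1)
  have ends_N2: "last ` insert (Q0 @ tl Tz) (insert (Qy @ tl Ty) K) = insert (last Ty) (insert (last Tz) (last ` K))"
    using lasts by (simp add: insert_commute)
  moreover have "insert (last Ty) (insert (last Tz) (last ` K)) \<subseteq> B"
    using Ty(3) Tz(3) ends by auto
  ultimately show thesis using that[OF fan_shrink_target[OF N2 B]] by simp
qed

text \<open>The augmentation step: the path T2 leaves the spoke P1 @ T1 of the fan at y = hd T1,
  a vertex outside the target, and meets the fan nowhere else.\<close>
context
  fixes V E x B Ps P1 T1 T2
  assumes fan: "fan V E x B Ps" and P: "P1 @ T1 \<in> Ps" "P1 \<noteq> []" "T1 \<noteq> []" "hd T1 \<notin> B"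
    and T2: "is_path V E T2" "hd T2 = hd T1" "set T2 \<inter> B = {last T2}"
      "set T2 \<inter> insert x (\<Union>(set ` Ps)) = {hd T1}"
begin

lemma fan_reroute:
  assumes B': "B' = B \<union> set T1 \<union> set T2" and Ps': "Ps' = insert (P1 @ [hd T1]) (Ps - {P1 @ T1})"
  shows "fan V E x B' Ps'"
proof -
  define y where "y = hd T1"
  define P where "P = P1 @ T1"
  have Ppath: "is_path V E P" and hP: "hd P1 = x" and PB: "set P \<inter> B = {last P}"
    using fanD(4-6)[OF fan P(1)] P(2) unfolding P_def by auto
  have T1: "T1 = y # tl T1" "y \<in> set T1" "last P = last T1" "last T1 \<in> set T1"
    using P(3) unfolding y_def P_def by auto
  have xP1: "x \<in> set P1" using hP P(2) hd_in_set by blast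
  have P1T1: "set P1 \<inter> set T1 = {}" using Ppath unfolding P_def by (simp add: is_path_iff)
  have yx: "y \<noteq> x" using xP1 T1(2) P1T1 by blast
  have P1B: "set P1 \<inter> B = {}" using PB T1(3,4) P1T1 unfolding P_def by (auto dest: equalityD1)
  have "set P1 \<inter> set T2 \<subseteq> set T2 \<inter> insert x (\<Union>(set ` Ps))" using P(1) by auto
  then have "set P1 \<inter> set T2 \<subseteq> {y}" using T2(4) unfolding y_def by simp
  then have P1T2: "set P1 \<inter> set T2 = {}" using P1T1 T1(2) by auto
  have old_B': "set Q \<inter> B' = {last Q}" if Q: "Q \<in> Ps - {P}" for Q
  proof -
    have QP: "set Q \<inter> set P = {x}" using fanD(7)[OF fan] Q P(1) unfolding P_def by blast
    then have "set Q \<inter> set T1 = {}" using xP1 P1T1 unfolding P_def by auto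
    moreover have "y \<notin> set Q" using QP yx T1(2) unfolding P_def by auto
    then have "set Q \<inter> set T2 = {}" using T2(4) Q unfolding y_def by (auto dest: equalityD1)
    ultimately show ?thesis using fanD(6)[OF fan] Q unfolding B' by (auto dest: equalityD1)
  qed
  have "x \<notin> set T2" using T2(4) yx unfolding y_def by auto
  then have "x \<notin> B'" using fanD(2)[OF fan] xP1 P1T1 unfolding B' by auto
  note rest = fan_retarget[OF fan_subset[OF fan Diff_subset[of Ps "{P}"]] this old_B']
  have "is_path V E (P1 @ [y])"
    using is_path_appendD1[of V E "P1 @ [y]" "tl T1"] Ppath T1(1) unfolding P_def by simp
  moreover have "set (P1 @ [y]) \<inter> B' = {last (P1 @ [y])}"
    using P1B P1T1 P1T2 T1(2) unfolding B' by auto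
  moreover have "set (P1 @ [y]) \<inter> set Q = {x}" if Q: "Q \<in> Ps - {P}" for Q
  proof -
    have "set Q \<inter> set P = {x}" using fanD(7)[OF fan] Q P(1) unfolding P_def by blast
    moreover have "set (P1 @ [y]) \<subseteq> set P" using T1(2) unfolding P_def by auto
    ultimately show ?thesis using xP1 by auto
  qed
  ultimately show ?thesis
    unfolding Ps' P_def[symmetric] y_def[symmetric]
    using fan_insert[OF rest] hP P(2) by (simp add: hd_append)
qed

lemma card_reroute:
  assumes "B' = B \<union> set T1 \<union> set T2" and Ps': "Ps' = insert (P1 @ [hd T1]) (Ps - {P1 @ T1})"
  shows "card Ps' = card Ps"
proof -
  have rest: "fan V E x B (Ps - {P1 @ T1})" using fan_subset[OF fan Diff_subset] .
  have "hd T1 \<notin> last ` (Ps - {P1 @ T1})"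
  proof
    assume "hd T1 \<in> last ` (Ps - {P1 @ T1})"
    then obtain p where "p \<in> Ps - {P1 @ T1}" "hd T1 = last p" by blast
    then show False using fan_last_in[OF rest] P(4) by metis
  qed
  then have "card (last ` Ps') = Suc (card (last ` (Ps - {P1 @ T1})))"
    unfolding Ps' using fanD(3)[OF rest] by simp
  also have "\<dots> = card Ps"
    using card_last_fan[OF rest] P(1) fanD(3)[OF fan] card_Diff1_less[of Ps "P1 @ T1"] by simp
  finally show ?thesis using card_last_fan[OF fan_reroute[OF assms]] by simp
qed

lemma reroute_decreases:
  assumes B': "B' = B \<union> set T1 \<union> set T2" and Ps': "Ps' = insert (P1 @ [hd T1]) (Ps - {P1 @ T1})"
  shows "card (\<Union>(set ` Ps') - B') < card (\<Union>(set ` Ps) - B)"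
proof (rule psubset_card_mono)
  show "finite (\<Union>(set ` Ps) - B)" using fanD(3)[OF fan] by auto
  have P_sub: "set (P1 @ T1) \<subseteq> \<Union>(set ` Ps)" using P(1) by blast
  moreover have "set (P1 @ [hd T1]) \<subseteq> set (P1 @ T1)" using P(3) by (cases T1) auto
  ultimately have "\<Union>(set ` Ps') \<subseteq> \<Union>(set ` Ps)" unfolding Ps' by auto
  moreover have "hd T1 \<in> \<Union>(set ` Ps) - B" using P_sub hd_in_set[OF P(3)] P(4) by auto
  moreover have "hd T1 \<notin> \<Union>(set ` Ps') - B'" using P(3) unfolding B' by simp
  ultimately show "\<Union>(set ` Ps') - B' \<subset> \<Union>(set ` Ps) - B" unfolding B' by blast
qed

lemma two_branches: "is_path V E T1" "set T1 \<inter> B = {last T1}" "set T1 \<inter> set T2 = {hd T1}"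
proof -
  have Ppath: "is_path V E (P1 @ T1)" and PB: "set (P1 @ T1) \<inter> B = {last (P1 @ T1)}"
    using fanD(4,6)[OF fan P(1)] by auto
  show "is_path V E T1" using is_path_appendD2[OF Ppath P(3)] .
  show "set T1 \<inter> B = {last T1}" using subset_meets_at_last[OF _ _ P(3) PB] P(3) by simp
  have "set T1 \<subseteq> insert x (\<Union>(set ` Ps))" using P(1) by auto
  then have "set T1 \<inter> set T2 \<subseteq> {hd T1}" using T2(4) by blast
  moreover have "hd T1 \<in> set T1" "hd T1 \<in> set T2"
    using P(3) T2(1,2) hd_in_set[of T2] by (auto simp: is_path_iff)
  ultimately show "set T1 \<inter> set T2 = {hd T1}" by blast
qed

lemma fan_recombine_branches:
  assumes B': "B' = B \<union> set T1 \<union> set T2" and T2_end: "last T2 \<notin> last ` Ps"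
    and Qs: "fan V E x B' Qs" "last ` (Ps - {P1 @ T1}) \<subseteq> last ` Qs"
    and Qy: "Qy \<in> Qs" "last Qy = hd T1"
    and Q0: "Q0 \<in> Qs" "last Q0 \<notin> insert (hd T1) (last ` (Ps - {P1 @ T1}))"
  shows "\<exists>N w. fan V E x B N \<and> w \<notin> last ` Ps \<and> insert w (last ` Ps) \<subseteq> last ` N"
proof -
  define y where "y = hd T1"
  define L where "L = last ` (Ps - {P1 @ T1})"
  define z where "z = last Q0"
  have Ps_ends: "last ` Ps = insert (last T1) L"
    using P(1,3) unfolding L_def by (auto intro: rev_image_eqI[OF P(1)])
  have "last T1 \<notin> L"
    using inj_on_last_fan[OF fan] P(1,3) unfolding L_def by (auto simp: inj_on_def)
  have L_B: "L \<subseteq> B" using fan_last_in[OF fan] unfolding L_def by blast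
  have z: "z \<noteq> y" "z \<in> V" "z \<in> set T1 \<union> set T2 \<union> B"
    using Q0 fan_last_in[OF Qs(1) Q0(1)] fanD(4)[OF Qs(1) Q0(1)] unfolding z_def y_def B'
    by (auto simp: is_path_iff)
  obtain Ty Tz where Ty: "is_path V E Ty" "hd Ty = y" and Tz: "is_path V E Tz" "hd Tz = z"
    and T: "set Ty \<union> set Tz \<subseteq> insert z (set T1 \<union> set T2)" "set Ty \<inter> set Tz = {}"
      "set Ty \<inter> B = {last Ty}" "set Tz \<inter> B = {last Tz}"
      "last T1 \<in> {last Ty, last Tz}" "{last Ty, last Tz} \<subseteq> {last T1, last T2, z}"
    using split_two_branches[OF two_branches(1) y_def[symmetric] two_branches(2) T2(1)
        T2(2)[folded y_def] T2(3) two_branches(3)[folded y_def] z] by blast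
  define K where "K = {Q \<in> Qs. last Q \<in> L}"
  have ends: "last Q \<in> B - (set Ty \<union> set Tz)" if Q: "Q \<in> K" for Q
  proof -
    have "last Q \<in> L" using Q unfolding K_def by simp
    then have "last Q \<in> B" "last Q \<noteq> last T1" "last Q \<noteq> last T2" "last Q \<noteq> z"
      using L_B \<open>last T1 \<notin> L\<close> T2_end Ps_ends Q0(2) unfolding z_def L_def by auto
    then show ?thesis using T(1) Int_singletonD[OF two_branches(2)] Int_singletonD[OF T2(3)] by blast
  qed
  obtain N where N: "fan V E x B N" "last ` N = insert (last Ty) (insert (last Tz) (last ` K))"
  proof (rule fan_extend_two[OF Qs(1) _ Qy(1) Q0(1) _ _ _ _ Ty(1) _ T(3) Tz(1) _ T(4) _ T(2) ends])
    show "B \<subseteq> B'" unfolding B' by blast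
    show "Qy \<noteq> Q0" "K \<subseteq> Qs" "Qy \<notin> K" "Q0 \<notin> K"
      using Qy Q0 L_B P(4) unfolding K_def L_def by auto
    show "hd Ty = last Qy" "hd Tz = last Q0" using Ty(2) Tz(2) Qy(2) unfolding z_def y_def by auto
    show "set Ty \<union> set Tz \<subseteq> B'" using T(1) z(3) unfolding B' by auto
  qed
  have "L \<subseteq> last ` K"
  proof
    fix l assume l: "l \<in> L"
    then obtain Q where "Q \<in> Qs" "l = last Q" using Qs(2) unfolding L_def by auto
    then show "l \<in> last ` K" unfolding K_def using l by (auto intro: rev_image_eqI)
  qed
  have "last Ty \<in> set Ty" "last Tz \<in> set Tz" using Ty(1) Tz(1) by (simp_all add: is_path_iff)
  then have "last Ty \<noteq> last Tz" using T(2) by auto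
  define w where "w = (if last Ty = last T1 then last Tz else last Ty)"
  have w: "w \<in> {last Ty, last Tz}" "w \<noteq> last T1" using \<open>last Ty \<noteq> last Tz\<close> unfolding w_def by auto
  then have "w = last T2 \<or> w = z" using T(6) by auto
  then have "w \<notin> insert (last T1) L"
    using T2_end[unfolded Ps_ends] Q0(2)[folded L_def] w(2) unfolding z_def by auto
  then have "w \<notin> last ` Ps" unfolding Ps_ends .
  moreover have "insert w (last ` Ps) \<subseteq> last ` N"
    unfolding N(2) Ps_ends using w(1) T(5) \<open>L \<subseteq> last ` K\<close> by auto
  ultimately show ?thesis using N(1) by blast
qed

lemma fan_recombine:
  assumes B': "B' = B \<union> set T1 \<union> set T2" and Ps': "Ps' = insert (P1 @ [hd T1]) (Ps - {P1 @ T1})"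
    and T2_end: "last T2 \<notin> last ` Ps"
    and Qs: "fan V E x B' Qs" "card Ps' < card Qs" "last ` Ps' \<subseteq> last ` Qs"
  shows "\<exists>Qs'. fan V E x B Qs' \<and> card Ps < card Qs' \<and> last ` Ps \<subseteq> last ` Qs'"
proof -
  have Ps'_ends: "last ` Ps' = insert (hd T1) (last ` (Ps - {P1 @ T1}))" unfolding Ps' by simp
  have fan': "fan V E x B' Ps'" by (rule fan_reroute[OF B' Ps'])
  have "card (last ` Ps') < card Qs" using Qs(2) by (simp add: card_last_fan[OF fan'])
  then obtain Q0 where Q0: "Q0 \<in> Qs" "last Q0 \<notin> last ` Ps'"
    by (rule fan_end_outside[OF Qs(1) finite_imageI[OF fanD(3)[OF fan']]])
  obtain Qy where Qy: "Qy \<in> Qs" "last Qy = hd T1" using Qs(3) Ps'_ends by auto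
  have "last ` (Ps - {P1 @ T1}) \<subseteq> last ` Qs" using Qs(3) Ps'_ends by auto
  then have "\<exists>N w. fan V E x B N \<and> w \<notin> last ` Ps \<and> insert w (last ` Ps) \<subseteq> last ` N"
    by (rule fan_recombine_branches[OF B' T2_end Qs(1) _ Qy Q0(1) Q0(2)[unfolded Ps'_ends]])
  then obtain N w where N: "fan V E x B N" "w \<notin> last ` Ps" "insert w (last ` Ps) \<subseteq> last ` N"
    by blast
  have "card (last ` Ps) < card N"
    using card_less_fan[OF N(1) finite_imageI[OF fanD(3)[OF fan]] N(3,2)] .
  then show ?thesis using N(1,3) card_last_fan[OF fan] by (intro exI[of _ N]) auto
qed

end

lemma connected_on_path_to:
  assumes "connected_on (V - X) E" "x \<in> V - X" "b \<in> V - X" "b \<in> B"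
  obtains R where "is_path V E R" "hd R = x" "set R \<inter> X = {}" "set R \<inter> B = {last R}"
proof -
  have "(\<lambda>a b. E a b \<and> a \<in> V - X \<and> b \<in> V - X)\<^sup>*\<^sup>* x b"
    using assms(1) unfolding connected_on_def using assms(2,3) by simp
  then obtain R0 where R0: "is_path (V - X) E R0" "hd R0 = x" "last R0 = b"
    using rtranclp_imp_is_path[OF _ assms(2)] by blast
  then have "set R0 \<inter> B \<noteq> {}" using assms(4) last_in_set[of R0] by (auto simp: is_path_iff)
  then obtain R where R: "is_path (V - X) E R" "hd R = x" "set R \<inter> B = {last R}"
    by (rule is_path_first_hit[OF R0(1)]) (use R0(2) in simp)
  have "set R \<inter> X = {}" using R(1) by (auto simp: is_path_iff)
  with R show thesis using that is_path_mono[OF R(1)] by blast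
qed

lemma fan_exit_path:
  assumes conn: "\<And>X. X \<subseteq> V \<Longrightarrow> finite X \<Longrightarrow> card X < k \<Longrightarrow> connected_on (V - X) E"
    and fan: "fan V E x B Ps" and "card Ps < k" "B \<subseteq> V" "k \<le> card B \<or> infinite B"
  obtains T where "is_path V E T" "set T \<inter> insert x (\<Union>(set ` Ps)) = {hd T}"
    "set T \<inter> B = {last T}" "last T \<notin> last ` Ps"
proof -
  define X where "X = last ` Ps"
  have X: "finite X" "card X < k" "X \<subseteq> B"
    using fanD(3)[OF fan] card_last_fan[OF fan] fan_last_in[OF fan] assms(3) unfolding X_def by auto
  have "\<not> B \<subseteq> X"
  proof
    assume "B \<subseteq> X"
    then have "finite B" "card B \<le> card X" using X(1) by (auto intro: finite_subset card_mono)
    then show False using X(2) assms(5) by simp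
  qed
  then obtain b where b: "b \<in> V - X" "b \<in> B" using assms(4) by blast
  have conn_X: "connected_on (V - X) E" by (rule conn) (use X assms(4) in auto)
  have "x \<in> V - X" using fanD(1,2)[OF fan] X(3) by blast
  then obtain R where R: "is_path V E R" "hd R = x" "set R \<inter> X = {}" "set R \<inter> B = {last R}"
    by (rule connected_on_path_to[OF conn_X _ b])
  define S where "S = insert x (\<Union>(set ` Ps))"
  have "x \<in> set R" "x \<in> S" using R(1,2) hd_in_set unfolding S_def by (auto simp: is_path_iff)
  then obtain R1 y R2 where Rs: "R = R1 @ y # R2" "y \<in> S" "\<forall>v\<in>set R2. v \<notin> S"
    using split_list_last_prop[of R "\<lambda>v. v \<in> S"] by blast
  have "is_path V E (y # R2)" using is_path_appendD2[of V E R1 "y # R2"] R(1) Rs(1) by simp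
  moreover have "set (y # R2) \<inter> S = {hd (y # R2)}" using Rs(2,3) by auto
  moreover have "set (y # R2) \<subseteq> set R" "last (y # R2) = last R" using Rs(1) by auto
  then have "set (y # R2) \<inter> B = {last (y # R2)}" by (rule subset_meets_at_last) (simp_all add: R(4))
  moreover have "last (y # R2) \<notin> X"
    using R(3) \<open>set (y # R2) \<subseteq> set R\<close> last_in_set[of "y # R2"] by blast
  ultimately show thesis using that unfolding S_def X_def by blast
qed

lemma exit_path_from_spoke:
  assumes fan: "fan V E x B Ps" and T: "T \<noteq> []" "set T \<inter> insert x (\<Union>(set ` Ps)) = {hd T}"
    "set T \<inter> B = {last T}" "last T \<notin> last ` Ps" "hd T \<noteq> x"
  obtains P1 T1 where "P1 @ T1 \<in> Ps" "P1 \<noteq> []" "T1 \<noteq> []" "hd T1 = hd T" "hd T1 \<notin> B"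
proof -
  obtain P where P: "P \<in> Ps" "hd T \<in> set P" using T(2,5) hd_in_set[OF T(1)] by blast
  then obtain P1 P2 where Ps: "P = P1 @ hd T # P2" using split_list by metis
  have "P1 \<noteq> []" using fanD(5)[OF fan P(1)] Ps T(5) by auto
  moreover have "hd T \<notin> B"
  proof
    assume "hd T \<in> B"
    then have "hd T = last T" "hd T = last P"
      using T(3) hd_in_set[OF T(1)] fanD(6)[OF fan P(1)] P(2) by blast+
    then show False using T(4) rev_image_eqI[OF P(1), of "last T" last] by simp
  qed
  ultimately show thesis using that[of P1 "hd T # P2"] P(1) Ps by simp
qed

text \<open>Induction on the number of fan vertices outside the target. An exit path T from the
  fan to B avoiding the current endpoints either starts at the hub and is simply added, or
  leaves a spoke P1 @ T1 at y = hd T1. In that case the spoke is cut at y and T1 and T are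
  added to the target, which lowers the measure; a larger fan for the enlarged target is then
  prolonged along the two branches T1 and T at y.\<close>
lemma fan_augment:
  assumes conn: "\<And>X. X \<subseteq> V \<Longrightarrow> finite X \<Longrightarrow> card X < k \<Longrightarrow> connected_on (V - X) E"
  shows "fan V E x B Ps \<Longrightarrow> card Ps < k \<Longrightarrow> B \<subseteq> V \<Longrightarrow> k \<le> card B \<or> infinite B
    \<Longrightarrow> \<exists>Qs. fan V E x B Qs \<and> card Ps < card Qs \<and> last ` Ps \<subseteq> last ` Qs"
proof (induction "card (\<Union>(set ` Ps) - B)" arbitrary: B Ps rule: less_induct)
  case less
  note fan = less.prems(1)
  obtain T where T: "is_path V E T" "set T \<inter> insert x (\<Union>(set ` Ps)) = {hd T}"
    "set T \<inter> B = {last T}" "last T \<notin> last ` Ps"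
    by (rule fan_exit_path[OF conn less.prems])
  have T_ne: "T \<noteq> []" using T(1) by (simp add: is_path_iff)
  show ?case
  proof (cases "hd T = x")
    case True
    have "set T \<inter> set p = {x}" if "p \<in> Ps" for p
    proof -
      have "x \<in> set p" using fanD(4,5)[OF fan that] hd_in_set by (auto simp: is_path_iff)
      then show ?thesis using T(2) True that T_ne hd_in_set[OF T_ne] by blast
    qed
    then have "fan V E x B (insert T Ps)" using fan_insert[OF fan T(1) True T(3)] by blast
    moreover have "T \<notin> Ps" using T(4) by auto
    ultimately show ?thesis using fanD(3)[OF fan] by (intro exI[of _ "insert T Ps"]) auto
  next
    case False
    then obtain P1 T1 where P: "P1 @ T1 \<in> Ps" "P1 \<noteq> []" "T1 \<noteq> []" "hd T1 = hd T" "hd T1 \<notin> B"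
      by (rule exit_path_from_spoke[OF fan T_ne T(2-4)])
    define B' where "B' = B \<union> set T1 \<union> set T"
    define Ps' where "Ps' = insert (P1 @ [hd T1]) (Ps - {P1 @ T1})"
    note ctx = fan P(1-3,5) T(1) P(4)[symmetric] T(3) T(2)[folded P(4)] B'_def Ps'_def
    have "B' \<subseteq> V" using less.prems(3) T(1) fanD(4)[OF fan P(1)]
      unfolding B'_def by (auto simp: is_path_iff)
    moreover have "k \<le> card B' \<or> infinite B'"
    proof (cases "finite B'")
      case True
      then have "card B \<le> card B'" "finite B" by (auto simp: B'_def intro: card_mono)
      then show ?thesis using less.prems(4) by auto
    qed simp
    ultimately obtain Qs where "fan V E x B' Qs" "card Ps' < card Qs" "last ` Ps' \<subseteq> last ` Qs"
      using less.hyps[OF reroute_decreases[OF ctx] fan_reroute[OF ctx]] card_reroute[OF ctx] less.prems(2)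
      by auto
    then show ?thesis by (rule fan_recombine[OF ctx T(4)])
  qed
qed

lemma fan_exists:
  assumes conn: "\<And>X. X \<subseteq> V \<Longrightarrow> finite X \<Longrightarrow> card X < k \<Longrightarrow> connected_on (V - X) E"
    and "x \<in> V" "x \<notin> B" "B \<subseteq> V" "k \<le> card B \<or> infinite B"
  obtains Ps where "fan V E x B Ps" "card Ps = k"
proof -
  have "\<exists>Ps. fan V E x B Ps \<and> m \<le> card Ps" if "m \<le> k" for m
    using that
  proof (induction m)
    case 0
    have "fan V E x B {}" using assms(2,3) unfolding fan_def by simp
    then show ?case by blast
  next
    case (Suc m)
    then obtain Ps where Ps: "fan V E x B Ps" "m \<le> card Ps" by auto
    show ?case
    proof (cases "card Ps < k")
      case True
      then show ?thesis using fan_augment[OF conn Ps(1) True assms(4,5)] Ps(2) by fastforce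
    next
      case False
      then show ?thesis using Ps Suc.prems by (intro exI[of _ Ps]) auto
    qed
  qed
  then obtain Ps where Ps: "fan V E x B Ps" "k \<le> card Ps" by blast
  then obtain Qs where "Qs \<subseteq> Ps" "card Qs = k"
    using obtain_subset_with_card_n by metis
  then show thesis using that fan_subset[OF Ps(1)] by blast
qed

subsection \<open>Small sets below an uncountable regular cardinal\<close>

locale uncountable_regular_card =
  fixes r :: "'k rel"
  assumes card_order: "Card_order r" and regular: "regularCard r" and uncountable: "(natLeq, r) \<in> ordLess"
begin

context
  includes cardinal_syntax
begin

lemma infinite_Field: "infinite (Field r)"
proof -
  have "|Field r| =o r" by (rule card_of_Field_ordIso[OF card_order])
  then have "natLeq \<le>o |Field r|"
    using ordLess_imp_ordLeq[OF uncountable] ordLeq_ordIso_trans ordIso_symmetric by blast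
  then show ?thesis using infinite_iff_natLeq_ordLeq by blast
qed

lemma stable: "stable r"
  using regularCard_stable[OF card_order infinite_Field regular] .

lemma finite_ordLess: "finite A \<Longrightarrow> |A| <o r"
  using finite_iff_ordLess_natLeq ordLess_transitive uncountable by blast

lemma UNION_ordLess: "|I| <o r \<Longrightarrow> (\<And>i. i \<in> I \<Longrightarrow> |F i| <o r) \<Longrightarrow> |\<Union>i\<in>I. F i| <o r"
  using stable_UNION[OF stable] .

lemma countable_UNION_ordLess: "(\<And>n::nat. |F n| <o r) \<Longrightarrow> |\<Union>n. F n| <o r"
  using UNION_ordLess[of UNIV F] card_of_nat ordIso_ordLess_trans uncountable by blast

lemma subset_image_ordLess: "A \<subseteq> f ` B \<Longrightarrow> |B| <o r \<Longrightarrow> |A| <o r"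
  using ordLeq_ordLess_trans[OF ordLeq_transitive[OF card_of_mono1 card_of_image]] .

lemma finite_subsets_ordLess:
  assumes U: "|U| <o r"
  shows "|{A. A \<subseteq> U \<and> finite A}| <o r"
proof -
  define L where "L n = {xs. set xs \<subseteq> U \<and> length xs = n}" for n
  have L: "|L n| <o r" for n
  proof (induction n)
    case 0
    have "L 0 = {[]}" unfolding L_def by auto
    then show ?case using finite_ordLess[of "{[]}"] by simp
  next
    case (Suc n)
    have "L (Suc n) \<subseteq> (\<lambda>(a, xs). a # xs) ` (U \<times> L n)"
    proof
      fix ys assume "ys \<in> L (Suc n)"
      then obtain a xs where "ys = a # xs" "a \<in> U" "xs \<in> L n"
        unfolding L_def by (cases ys) auto
      then show "ys \<in> (\<lambda>(a, xs). a # xs) ` (U \<times> L n)" by force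
    qed
    moreover have "|U \<times> L n| <o r" using stable_elim[OF stable U, of "\<lambda>_. L n"] Suc by simp
    ultimately show ?case by (rule subset_image_ordLess)
  qed
  have "{A. A \<subseteq> U \<and> finite A} \<subseteq> set ` (\<Union>n. L n)"
  proof
    fix A assume "A \<in> {A. A \<subseteq> U \<and> finite A}"
    then obtain xs where "set xs = A" "A \<subseteq> U" using finite_list by blast
    then show "A \<in> set ` (\<Union>n. L n)" unfolding L_def by blast
  qed
  then show ?thesis using countable_UNION_ordLess[OF L] by (rule subset_image_ordLess)
qed

text \<open>The closure is reached after countably many rounds, each adding fewer than r elements;
  this is where uncountability of r is needed.\<close>
lemma closure_ordLess:
  assumes U0: "|U0| <o r" and F: "\<And>A. finite A \<Longrightarrow> |F A| <o r"
  obtains U where "U0 \<subseteq> U" "U \<subseteq> U0 \<union> (\<Union>A. F A)" "|U| <o r"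
    "\<And>A. finite A \<Longrightarrow> A \<subseteq> U \<Longrightarrow> F A \<subseteq> U"
proof -
  define step where "step Y = Y \<union> (\<Union>A\<in>{A. A \<subseteq> Y \<and> finite A}. F A)" for Y
  define Us where "Us n = (step ^^ n) U0" for n
  have Us_Suc: "Us (Suc n) = step (Us n)" for n unfolding Us_def by simp
  have small: "|Us n| <o r" for n
  proof (induction n)
    case (Suc n)
    have "|\<Union>A\<in>{A. A \<subseteq> Us n \<and> finite A}. F A| <o r"
      using UNION_ordLess[OF finite_subsets_ordLess[OF Suc]] F by blast
    then show ?case
      unfolding Us_Suc step_def using card_of_Un_ordLess_infinite_Field[OF infinite_Field card_order Suc] by blast
  qed (simp add: Us_def U0)
  have mono: "m \<le> n \<Longrightarrow> Us m \<subseteq> Us n" for m n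
    using lift_Suc_mono_le[of Us] Us_Suc unfolding step_def by blast
  have bounded: "Us n \<subseteq> U0 \<union> (\<Union>A. F A)" for n
    by (induction n) (auto simp: Us_def step_def)
  have closed: "F A \<subseteq> (\<Union>n. Us n)" if "finite A" "A \<subseteq> (\<Union>n. Us n)" for A
  proof -
    have "\<exists>n. A \<subseteq> Us n" using that
    proof (induction A rule: finite_induct)
      case (insert a A)
      then obtain m n where "a \<in> Us m" "A \<subseteq> Us n" by blast
      then have "insert a A \<subseteq> Us (max m n)" using mono[of m "max m n"] mono[of n "max m n"] by auto
      then show ?case by blast
    qed simp
    then obtain n where "A \<subseteq> Us n" by blast
    then have "F A \<subseteq> Us (Suc n)" using that(1) unfolding Us_Suc step_def by blast
    then show ?thesis by blast
  qed
  show thesis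
  proof (rule that[of "\<Union>n. Us n"])
    have "Us 0 = U0" unfolding Us_def by simp
    then show "U0 \<subseteq> (\<Union>n. Us n)" by blast
  qed (use bounded countable_UNION_ordLess[OF small] closed in auto)
qed

end

end

lemma not_subset_if_ordLess:
  assumes "(r, card_of V) \<in> ordLeq" "(card_of W, r) \<in> ordLess"
  shows "\<not> V \<subseteq> W"
proof
  assume "V \<subseteq> W"
  then have "(r, card_of W) \<in> ordLeq" using ordLeq_transitive[OF assms(1) card_of_mono1] by blast
  then show False using assms(2) not_ordLess_ordLeq by blast
qed

subsection \<open>Targets of fans that avoid every small set\<close>

lemma maximal_disjoint_subfamily:
  obtains M where "M \<subseteq> D" "pairwise (\<lambda>d d'. F d \<inter> F d' = {}) M"
    "\<And>d. d \<in> D \<Longrightarrow> (\<And>d'. d' \<in> M \<Longrightarrow> F d \<inter> F d' = {}) \<Longrightarrow> d \<in> M"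
proof -
  define Fam where "Fam = {M. M \<subseteq> D \<and> pairwise (\<lambda>d d'. F d \<inter> F d' = {}) M}"
  have "\<Union>C \<in> Fam" if "C \<in> chains Fam" for C
    using that pairwise_chain_Union[of C] unfolding chains_def Fam_def by blast
  then obtain M where M: "M \<in> Fam" and max: "\<And>M'. M' \<in> Fam \<Longrightarrow> M \<subseteq> M' \<Longrightarrow> M' = M"
    using Zorn_Lemma[of Fam] by blast
  show thesis
  proof (rule that)
    show "M \<subseteq> D" "pairwise (\<lambda>d d'. F d \<inter> F d' = {}) M" using M unfolding Fam_def by auto
    fix d assume "d \<in> D" "\<And>d'. d' \<in> M \<Longrightarrow> F d \<inter> F d' = {}"
    then have "insert d M \<in> Fam" using M unfolding Fam_def by (auto simp: pairwise_insert Int_commute)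
    then show "d \<in> M" using max by blast
  qed
qed

text \<open>The hub is part of the interior even of an empty fan, which keeps the hubs of disjoint
  fans distinct when k = 0.\<close>
definition fan_interior :: "'a \<Rightarrow> 'a list set \<Rightarrow> 'a set \<Rightarrow> 'a set" where
  "fan_interior x Ps A = insert x (\<Union>(set ` Ps)) - A"

definition robust_fan_target :: "'k rel \<Rightarrow> 'a set \<Rightarrow> ('a \<Rightarrow> 'a \<Rightarrow> bool) \<Rightarrow> 'a set \<Rightarrow> bool" where
  "robust_fan_target r V E A \<longleftrightarrow> (\<forall>W. W \<subseteq> V \<and> (card_of W, r) \<in> ordLess \<longrightarrow>
     (\<exists>x Ps. fan V E x A Ps \<and> last ` Ps = A \<and> fan_interior x Ps A \<inter> W = {}))"

lemma finite_fan_interior: "fan V E x A Ps \<Longrightarrow> finite (fan_interior x Ps A)"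
  unfolding fan_interior_def by (simp add: fanD(3))

lemma fan_interior_subset:
  assumes "fan V E x A Ps"
  shows "fan_interior x Ps A \<subseteq> V"
proof -
  have "set p \<subseteq> V" if "p \<in> Ps" for p using fanD(4)[OF assms that] by (simp add: is_path_iff)
  then show ?thesis using fanD(1)[OF assms] unfolding fan_interior_def by blast
qed

lemma fan_interior_disjoint_target:
  assumes "fan V E x U Ps"
  shows "fan_interior x Ps (last ` Ps) \<inter> U = {}"
proof -
  have "v \<in> last ` Ps" if "v \<in> set p" "p \<in> Ps" "v \<in> U" for v p
    using Int_singletonD[OF fanD(6)[OF assms that(2)] that(1,3)] that(2) by blast
  then show ?thesis using fanD(2)[OF assms] unfolding fan_interior_def by blast
qed

context uncountable_regular_card
begin

context
  includes cardinal_syntax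
begin

lemma blocking_sets:
  obtains Wb where "\<And>A. Wb A \<subseteq> V" "\<And>A. |Wb A| <o r"
    "\<And>A x Ps. \<not> robust_fan_target r V E A \<Longrightarrow> fan V E x A Ps \<Longrightarrow> last ` Ps = A \<Longrightarrow>
       fan_interior x Ps A \<inter> Wb A \<noteq> {}"
proof -
  have "\<forall>A. \<exists>W. W \<subseteq> V \<and> |W| <o r \<and> (\<not> robust_fan_target r V E A \<longrightarrow>
      (\<forall>x Ps. fan V E x A Ps \<and> last ` Ps = A \<longrightarrow> fan_interior x Ps A \<inter> W \<noteq> {}))"
  proof
    fix A
    show "\<exists>W. W \<subseteq> V \<and> |W| <o r \<and> (\<not> robust_fan_target r V E A \<longrightarrow>
      (\<forall>x Ps. fan V E x A Ps \<and> last ` Ps = A \<longrightarrow> fan_interior x Ps A \<inter> W \<noteq> {}))"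
    proof (cases "robust_fan_target r V E A")
      case True
      then show ?thesis using finite_ordLess[of "{}"] by (intro exI[of _ "{}"]) simp
    next
      case False
      then obtain W where "W \<subseteq> V" "|W| <o r"
        "\<not> (\<exists>x Ps. fan V E x A Ps \<and> last ` Ps = A \<and> fan_interior x Ps A \<inter> W = {})"
        unfolding robust_fan_target_def by blast
      then show ?thesis by (intro exI[of _ W]) auto
    qed
  qed
  from choice[OF this] obtain Wb where Wb: "\<forall>A. Wb A \<subseteq> V \<and> |Wb A| <o r \<and>
      (\<not> robust_fan_target r V E A \<longrightarrow>
      (\<forall>x Ps. fan V E x A Ps \<and> last ` Ps = A \<longrightarrow> fan_interior x Ps A \<inter> Wb A \<noteq> {}))" ..
  show thesis
  proof (rule that)
    show "Wb A \<subseteq> V" "|Wb A| <o r" for A using spec[OF Wb, of A] by simp_all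
    show "fan_interior x Ps A \<inter> Wb A \<noteq> {}"
      if "\<not> robust_fan_target r V E A" "fan V E x A Ps" "last ` Ps = A" for A x Ps
      using spec[OF Wb, of A] that by simp
  qed
qed

lemma exists_robust_fan_target:
  assumes conn: "\<And>X. X \<subseteq> V \<Longrightarrow> finite X \<Longrightarrow> card X < k \<Longrightarrow> connected_on (V - X) E"
    and rV: "r \<le>o |V|"
  obtains A where "A \<subseteq> V" "finite A" "card A = k" "robust_fan_target r V E A"
proof -
  have "natLeq \<le>o |V|" using ordLeq_transitive[OF ordLess_imp_ordLeq[OF uncountable] rV] .
  then have "infinite V" using infinite_iff_natLeq_ordLeq by blast
  then obtain U0 where U0: "U0 \<subseteq> V" "finite U0" "card U0 = k"
    using infinite_arbitrarily_large[of V k] by blast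
  obtain Wb where Wb: "\<And>A. Wb A \<subseteq> V" "\<And>A. |Wb A| <o r"
    "\<And>A x Ps. \<not> robust_fan_target r V E A \<Longrightarrow> fan V E x A Ps \<Longrightarrow> last ` Ps = A \<Longrightarrow>
       fan_interior x Ps A \<inter> Wb A \<noteq> {}"
    using blocking_sets by blast
  obtain U where U: "U0 \<subseteq> U" "U \<subseteq> U0 \<union> (\<Union>A. Wb A)" "|U| <o r"
      and closed: "\<And>A. finite A \<Longrightarrow> A \<subseteq> U \<Longrightarrow> Wb A \<subseteq> U"
    using closure_ordLess[where F = Wb, OF finite_ordLess[OF U0(2)] Wb(2)] by blast
  have UV: "U \<subseteq> V" using U(2) U0(1) Wb(1) by blast
  obtain x where x: "x \<in> V" "x \<notin> U" using not_subset_if_ordLess[OF rV U(3)] by blast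
  have "k \<le> card U \<or> infinite U" using U0(3) U(1) card_mono by blast
  then obtain Ps where Ps: "fan V E x U Ps" "card Ps = k"
    using fan_exists[OF conn x(1) x(2) UV] by blast
  define A where "A = last ` Ps"
  have A: "A \<subseteq> U" "finite A" "card A = k"
    using fan_last_in[OF Ps(1)] fanD(3)[OF Ps(1)] card_last_fan[OF Ps(1)] Ps(2) unfolding A_def by auto
  have "fan_interior x Ps A \<inter> Wb A = {}"
    using fan_interior_disjoint_target[OF Ps(1)] closed[OF A(2,1)] unfolding A_def by blast
  then have "robust_fan_target r V E A"
    using Wb(3) fan_shrink_target[OF Ps(1) A(1)] unfolding A_def by blast
  with A UV show thesis using that by blast
qed

lemma disjoint_fans:
  assumes robust: "robust_fan_target r V E A"
  obtains c Ps where "\<And>j. j \<in> Field r \<Longrightarrow> fan V E (c j) A (Ps j) \<and> last ` Ps j = A"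
    "\<And>i j. i \<in> Field r \<Longrightarrow> j \<in> Field r \<Longrightarrow> i \<noteq> j \<Longrightarrow>
       fan_interior (c i) (Ps i) A \<inter> fan_interior (c j) (Ps j) A = {}"
proof -
  define D where "D = {(x, Ps). fan V E x A Ps \<and> last ` Ps = A}"
  define int where "int d = fan_interior (fst d) (snd d) A" for d
  obtain M where MD: "M \<subseteq> D" and M_disj: "pairwise (\<lambda>d d'. int d \<inter> int d' = {}) M"
    and max: "\<And>d. d \<in> D \<Longrightarrow> (\<And>d'. d' \<in> M \<Longrightarrow> int d \<inter> int d' = {}) \<Longrightarrow> d \<in> M"
    using maximal_disjoint_subfamily[of D int] by blast
  have int_fan: "finite (int d) \<and> int d \<subseteq> V" if "d \<in> D" for d
  proof -
    have "fan V E (fst d) A (snd d)" using that unfolding D_def by auto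
    then show ?thesis unfolding int_def by (simp add: finite_fan_interior fan_interior_subset)
  qed
  have "r \<le>o |M|"
  proof (rule ccontr)
    assume "\<not> r \<le>o |M|"
    then have "|M| <o r"
      using not_ordLeq_iff_ordLess[OF card_of_Well_order card_order_on_well_order_on[OF card_order]] by blast
    then have "|\<Union>d\<in>M. int d| <o r"
      by (rule UNION_ordLess) (use finite_ordLess int_fan MD in blast)
    moreover have "(\<Union>d\<in>M. int d) \<subseteq> V" using int_fan MD by blast
    ultimately have "\<exists>x Ps. fan V E x A Ps \<and> last ` Ps = A \<and> fan_interior x Ps A \<inter> (\<Union>d\<in>M. int d) = {}"
      using robust unfolding robust_fan_target_def by simp
    then obtain x Ps where d0: "(x, Ps) \<in> D" "int (x, Ps) \<inter> (\<Union>d\<in>M. int d) = {}"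
      unfolding D_def int_def by auto
    have "fan V E x A Ps" using d0(1) unfolding D_def by simp
    then have "x \<in> int (x, Ps)" using fanD(2) unfolding int_def fan_interior_def by simp
    moreover have "(x, Ps) \<in> M" using max d0 by blast
    ultimately show False using d0(2) by blast
  qed
  then obtain g where g: "inj_on g (Field r)" "g ` Field r \<subseteq> M"
    using ordIso_ordLeq_trans[OF card_of_Field_ordIso[OF card_order]] card_of_ordLeq by metis
  show thesis
  proof (rule that[of "\<lambda>j. fst (g j)" "\<lambda>j. snd (g j)"])
    show "fan V E (fst (g j)) A (snd (g j)) \<and> last ` snd (g j) = A" if "j \<in> Field r" for j
    proof -
      have "g j \<in> D" using g(2) MD that by blast
      then show ?thesis unfolding D_def by (cases "g j") simp
    qed
    show "fan_interior (fst (g i)) (snd (g i)) A \<inter> fan_interior (fst (g j)) (snd (g j)) A = {}"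
      if "i \<in> Field r" "j \<in> Field r" "i \<noteq> j" for i j
      using M_disj g that unfolding pairwise_def int_def inj_on_def by blast
  qed
qed

end

end

subsection \<open>Assembling the subdivision\<close>

lemma inner_fan_path:
  assumes fan: "fan V E x B Ps" and p: "p \<in> Ps"
  shows "inner p = set p - {x, last p}" "inner p \<inter> B = {}" "inner p \<subseteq> fan_interior x Ps B"
proof -
  have "distinct p" using fanD(4)[OF fan p] by (simp add: is_path_iff)
  with fanD(5)[OF fan p] show inner: "inner p = set p - {x, last p}" by (simp add: inner_eq)
  then show "inner p \<inter> B = {}" using fanD(6)[OF fan p] by auto
  then show "inner p \<subseteq> fan_interior x Ps B" using inner p unfolding fan_interior_def by blast
qed

lemma inner_fan_paths_disjoint:
  assumes fan: "fan V E x B Ps" and "p \<in> Ps" "q \<in> Ps" "p \<noteq> q"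
  shows "inner p \<inter> inner q = {}"
proof -
  have "inner p \<subseteq> set p - {x}" "inner q \<subseteq> set q - {x}" using inner_fan_path(1)[OF fan] assms by auto
  then show ?thesis using fanD(7)[OF fan assms(2-4)] by blast
qed

locale fan_family =
  fixes V E A J c Ps
  assumes fans: "\<And>j. j \<in> J \<Longrightarrow> fan V E (c j) A (Ps j)"
    and disj: "\<And>i j. i \<in> J \<Longrightarrow> j \<in> J \<Longrightarrow> i \<noteq> j \<Longrightarrow>
       fan_interior (c i) (Ps i) A \<inter> fan_interior (c j) (Ps j) A = {}"
begin

lemma hub_in_fan_interior: "j \<in> J \<Longrightarrow> c j \<in> fan_interior (c j) (Ps j) A"
  using fanD(2)[OF fans] unfolding fan_interior_def by blast

lemma inj_on_hubs: "inj_on c J"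
proof (rule inj_onI, rule ccontr)
  fix i j assume ij: "i \<in> J" "j \<in> J" "c i = c j" "i \<noteq> j"
  then show False using hub_in_fan_interior[OF ij(1)] hub_in_fan_interior[OF ij(2)] disj[OF ij(1,2,4)] by auto
qed

lemma inner_avoids_branch_vertices:
  assumes "j \<in> J" "p \<in> Ps j"
  shows "inner p \<inter> (A \<union> c ` J) = {}"
proof -
  note p = inner_fan_path[OF fans[OF assms(1)] assms(2)]
  have "c j' \<notin> inner p" if j': "j' \<in> J" for j'
  proof (cases "j' = j")
    case True
    then show ?thesis using p(1) by simp
  next
    case False
    then show ?thesis using p(3) hub_in_fan_interior[OF j'] disj[OF j' assms(1) False] by blast
  qed
  then show ?thesis using p(2) by blast
qed

lemma inner_disjoint:
  assumes "j \<in> J" "j' \<in> J" "p \<in> Ps j" "q \<in> Ps j'" "(j, p) \<noteq> (j', q)"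
  shows "inner p \<inter> inner q = {}"
proof (cases "j = j'")
  case True
  then show ?thesis using inner_fan_paths_disjoint[OF fans[OF assms(1)] assms(3)] assms(4,5) by simp
next
  case False
  then show ?thesis
    using inner_fan_path(3)[OF fans[OF assms(1)] assms(3)] inner_fan_path(3)[OF fans[OF assms(2)] assms(4)]
      disj[OF assms(1,2) False] by blast
qed

end

lemma inj_on_case_sum:
  assumes "inj_on f A" "inj_on g B" "f ` A \<inter> g ` B = {}"
  shows "inj_on (case_sum f g) (A <+> B)"
proof (rule inj_onI)
  fix u v assume "u \<in> A <+> B" "v \<in> A <+> B" "case_sum f g u = case_sum f g v"
  moreover have "f x \<noteq> g y" "g y \<noteq> f x" if "x \<in> A" "y \<in> B" for x y using assms(3) that by blast+
  ultimately show "u = v" using assms(1,2) by (auto elim!: PlusE dest: inj_onD)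
qed

lemma KB_subdivision_of_paths:
  fixes a :: "nat \<Rightarrow> 'a" and c :: "'k \<Rightarrow> 'a"
  defines "f \<equiv> case_sum a c"
  assumes f: "inj_on f (KB_verts k r)" "f ` KB_verts k r \<subseteq> V"
    and symE: "\<And>x y. E x y \<Longrightarrow> E y x"
    and Q: "\<And>i j. i < k \<Longrightarrow> j \<in> Field r \<Longrightarrow> is_path V E (Q i j) \<and> hd (Q i j) = c j \<and>
      last (Q i j) = a i \<and> inner (Q i j) \<inter> f ` KB_verts k r = {}"
    and disj: "\<And>i j i' j'. i < k \<Longrightarrow> j \<in> Field r \<Longrightarrow> i' < k \<Longrightarrow> j' \<in> Field r \<Longrightarrow>
      (i, j) \<noteq> (i', j') \<Longrightarrow> inner (Q i j) \<inter> inner (Q i' j') = {}"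
  shows "contains_subdivision V E (KB_verts k r) (KB_edges k r)"
proof -
  define P where
    "P u v = (case (u, v) of (Inr j, Inl i) \<Rightarrow> Q i j | (Inl i, Inr j) \<Rightarrow> rev (Q i j) | _ \<Rightarrow> [])" for u v
  have edge: "\<exists>i j. i < k \<and> j \<in> Field r \<and> {u, v} = {Inl i, Inr j} \<and> inner (P u v) = inner (Q i j) \<and>
      (u = Inr j \<and> v = Inl i \<and> P u v = Q i j \<or> u = Inl i \<and> v = Inr j \<and> P u v = rev (Q i j))"
    if uv: "KB_edges k r u v" for u v
  proof -
    obtain i j where "i < k" "j \<in> Field r" "u = Inl i \<and> v = Inr j \<or> u = Inr j \<and> v = Inl i"
      using uv unfolding KB_edges_def by blast
    then show ?thesis by (intro exI[of _ i] exI[of _ j]) (auto simp: P_def inner_rev)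
  qed
  have edge_path: "is_path V E (P u v) \<and> hd (P u v) = f u \<and> last (P u v) = f v \<and> P v u = rev (P u v) \<and>
      inner (P u v) \<inter> f ` KB_verts k r = {}" if uv: "KB_edges k r u v" for u v
  proof -
    obtain i j where ij: "i < k" "j \<in> Field r" "inner (P u v) = inner (Q i j)"
      "u = Inr j \<and> v = Inl i \<and> P u v = Q i j \<or> u = Inl i \<and> v = Inr j \<and> P u v = rev (Q i j)"
      using edge[OF uv] by blast
    note Qij = Q[OF ij(1,2)]
    have "is_path V E (rev (Q i j))" using is_path_rev[OF conjunct1[OF Qij] symE] .
    moreover have "Q i j \<noteq> []" using Qij by (simp add: is_path_iff)
    ultimately show ?thesis using ij(3,4) Qij unfolding f_def by (auto simp: P_def hd_rev last_rev)
  qed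
  have edge_disj: "inner (P u v) \<inter> inner (P u' v') = {}"
    if uv: "KB_edges k r u v" "KB_edges k r u' v'" "{u, v} \<noteq> {u', v'}" for u v u' v'
  proof -
    obtain i j where ij: "i < k" "j \<in> Field r" "{u, v} = {Inl i, Inr j}" "inner (P u v) = inner (Q i j)"
      using edge[OF uv(1)] by blast
    obtain i' j' where ij': "i' < k" "j' \<in> Field r" "{u', v'} = {Inl i', Inr j'}"
      "inner (P u' v') = inner (Q i' j')"
      using edge[OF uv(2)] by blast
    have "(i, j) \<noteq> (i', j')" using uv(3) ij(3) ij'(3) by auto
    then show ?thesis using disj[OF ij(1,2) ij'(1,2)] ij(4) ij'(4) by simp
  qed
  show ?thesis
    unfolding contains_subdivision_def
    by (intro exI[of _ f] exI[of _ P] conjI allI impI f) (use edge_path edge_disj in auto)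
qed

lemma KB_subdivision_of_fans:
  assumes sg: "sgraph V E" and A: "A \<subseteq> V" "finite A" "card A = k"
    and fans: "\<And>j. j \<in> Field r \<Longrightarrow> fan V E (c j) A (Ps j) \<and> last ` Ps j = A"
    and disj: "\<And>i j. i \<in> Field r \<Longrightarrow> j \<in> Field r \<Longrightarrow> i \<noteq> j \<Longrightarrow>
       fan_interior (c i) (Ps i) A \<inter> fan_interior (c j) (Ps j) A = {}"
  shows "contains_subdivision V E (KB_verts k r) (KB_edges k r)"
proof -
  note fan_j = conjunct1[OF fans]
  interpret family: fan_family V E A "Field r" c Ps using fan_j disj by unfold_locales
  obtain a where "bij_betw a {..<k} A" using finite_same_card_bij[of "{..<k}" A] A(2,3) by auto
  then have a_inj: "inj_on a {..<k}" and a_img: "a ` {..<k} = A" by (auto simp: bij_betw_def)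
  define Q where "Q i j = the_inv_into (Ps j) last (a i)" for i j
  have Q: "Q i j \<in> Ps j" "last (Q i j) = a i" if "i < k" "j \<in> Field r" for i j
  proof -
    have inj: "inj_on last (Ps j)" using inj_on_last_fan fan_j[OF that(2)] .
    have "a i \<in> last ` Ps j" using a_img that(1) fans[OF that(2)] by auto
    then show "Q i j \<in> Ps j" "last (Q i j) = a i"
      using the_inv_into_into[OF inj _ order_refl] f_the_inv_into_f[OF inj] unfolding Q_def by simp_all
  qed
  have f_img: "case_sum a c ` KB_verts k r = A \<union> c ` Field r"
    using a_img unfolding KB_verts_def by (auto simp: image_Un image_image Plus_def)
  have "A \<inter> c ` Field r = {}" using fanD(2)[OF fan_j] by blast
  then have "a ` {..<k} \<inter> c ` Field r = {}" unfolding a_img .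
  then have "inj_on (case_sum a c) (KB_verts k r)"
    unfolding KB_verts_def by (rule inj_on_case_sum[OF a_inj family.inj_on_hubs])
  moreover have "case_sum a c ` KB_verts k r \<subseteq> V" unfolding f_img using A(1) fanD(1)[OF fan_j] by blast
  moreover have "\<And>x y. E x y \<Longrightarrow> E y x" using sg unfolding sgraph_def by blast
  ultimately show ?thesis
  proof (rule KB_subdivision_of_paths[where Q = Q])
    fix i j assume ij: "i < k" "j \<in> Field r"
    show "is_path V E (Q i j) \<and> hd (Q i j) = c j \<and> last (Q i j) = a i \<and>
      inner (Q i j) \<inter> case_sum a c ` KB_verts k r = {}"
      unfolding f_img using fanD(4,5)[OF fan_j[OF ij(2)] Q(1)[OF ij]] Q(2)[OF ij]
        family.inner_avoids_branch_vertices[OF ij(2) Q(1)[OF ij]] by simp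
  next
    fix i j i' j' assume ij: "i < k" "j \<in> Field r" "i' < k" "j' \<in> Field r" "(i, j) \<noteq> (i', j')"
    then have "(j, Q i j) \<noteq> (j', Q i' j')" using Q(2) inj_onD[OF a_inj] by (metis lessThan_iff prod.inject)
    then show "inner (Q i j) \<inter> inner (Q i' j') = {}"
      using family.inner_disjoint[OF ij(2,4) Q(1)[OF ij(1,2)] Q(1)[OF ij(3,4)]] by simp
  qed
qed

theorem theorem2p1:
  fixes r :: "'k rel" and k :: nat and V :: "'a set" and E :: "'a \<Rightarrow> 'a \<Rightarrow> bool"
  assumes "Card_order r" and "regularCard r" and "(natLeq, r) \<in> ordLess"
    and "sgraph V E" and "k_connected V E k"
    and "(r, card_of V) \<in> ordLeq"
  shows "contains_subdivision V E (KB_verts k r) (KB_edges k r)"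
proof -
  interpret uncountable_regular_card r using assms(1-3) by unfold_locales
  have conn: "\<And>X. X \<subseteq> V \<Longrightarrow> finite X \<Longrightarrow> card X < k \<Longrightarrow> connected_on (V - X) E"
    using assms(5) unfolding k_connected_def by blast
  obtain A where A: "A \<subseteq> V" "finite A" "card A = k" "robust_fan_target r V E A"
    using exists_robust_fan_target[OF conn assms(6)] by blast
  obtain c Ps where "\<And>j. j \<in> Field r \<Longrightarrow> fan V E (c j) A (Ps j) \<and> last ` Ps j = A"
    "\<And>i j. i \<in> Field r \<Longrightarrow> j \<in> Field r \<Longrightarrow> i \<noteq> j \<Longrightarrow>
       fan_interior (c i) (Ps i) A \<inter> fan_interior (c j) (Ps j) A = {}"
    using disjoint_fans[OF A(4)] by blast
  then show ?thesis by (rule KB_subdivision_of_fans[OF assms(4) A(1-3)])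
qed

end
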